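(* Let $L\ge 18$ be even. Then \[ M_S(L,3)\le\begin{cases}\lfloor (L+4)/8\rfloor & \text{if } L\equiv 0 \pmod{12},\\ \lfloor (L+2)/8\rfloor & \text{if } L\equiv 4,6,8 \pmod{12},\\ \lfloor L/8\rfloor & \text{if } L\equiv 2,10 \pmod{12}.\end{cases} \]
   Context: $\mathcal{P}(L,\omega)$ is the set of $\omega$-element subsets of $\mathbb{Z}_L$. For $\mathcal{I}\in\mathcal{P}(L,\omega)$: $d(\mathcal{I})=\{a-b \bmod L: a,b\in\mathcal{I}\}$, $d^*(\mathcal{I})=d(\mathcal{I})\setminus\{0\}$. A strongly conflict-avoiding code (SCAC) of length $L$ and weight $\omega$ is a set $\mathcal{C}=\{\mathcal{I}_1,\dots,\mathcal{I}_M\}\subseteq\mathcal{P}(L,\omega)$ such that for all $j\ne k$, $\big(d^*(\mathcal{I}_j)\cup(d^*(\mathcal{I}_j)+1)\cup(d^*(\mathcal{I}_j)-1)\big)\cap d(\mathcal{I}_k)=\emptyset$ (shifts mod $L$). $M_S(L,\omega)$ denotes the maximum number of codewords in an SCAC of length $L$ and weight $\omega$. *)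

theory Defs
  imports Main
begin

text \<open>Z_L is represented by {0..<L} :: nat set with arithmetic modulo L.\<close>

definition P_set :: "nat \<Rightarrow> nat \<Rightarrow> nat set set" where
  "P_set L w = {I. I \<subseteq> {0..<L} \<and> card I = w}"

definition dset :: "nat \<Rightarrow> nat set \<Rightarrow> nat set" where
  "dset L I = {(a + L - b) mod L | a b. a \<in> I \<and> b \<in> I}"

definition dstar :: "nat \<Rightarrow> nat set \<Rightarrow> nat set" where
  "dstar L I = dset L I - {0}"

definition shift_closure :: "nat \<Rightarrow> nat set \<Rightarrow> nat set" where
  "shift_closure L D = D \<union> ((\<lambda>x. (x + 1) mod L) ` D) \<union> ((\<lambda>x. (x + L - 1) mod L) ` D)"

definition is_SCAC :: "nat \<Rightarrow> nat \<Rightarrow> nat set set \<Rightarrow> bool" where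
  "is_SCAC L w C \<longleftrightarrow> C \<subseteq> P_set L w \<and>
     (\<forall>I\<in>C. \<forall>J\<in>C. I \<noteq> J \<longrightarrow> shift_closure L (dstar L I) \<inter> dset L J = {})"

definition M_S :: "nat \<Rightarrow> nat \<Rightarrow> nat" where
  "M_S L w = Max {card C | C. is_SCAC L w C}"

end

theory Submission
  imports Defs
begin

(* A codeword {x < y < z} of Z_L is determined up to translation by its three gaps p, q, r
   (p + q + r = L); its nonzero differences are p, q, r, q + r, p + r, p + q.  If the code has
   at least two codewords, no codeword has the difference 1, so all gaps are >= 2 and all
   differences lie in [2, L - 2].  The footprint D \<union> (D + 1) of the difference set D of a
   codeword then lies in [2, L - 1], and the SCAC condition makes the footprints of distinct
   codewords disjoint.  A case analysis on the gaps shows that a footprint has at least 8 points,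
   with two kinds of exceptions, which are detected by containing L div 3 or L div 4 and hence
   occur for at most one codeword each.  Counting points of [2, L - 1] gives
   8 |C| <= L - 2 + (4 or 2) + (2 or 0), which yields the bound in each residue class mod 12. *)

lemma diff_mod_eq:
  fixes a b L :: nat
  assumes "a < L" "b < L"
  shows "(a + L - b) mod L = (if b \<le> a then a - b else a + L - b)"
proof (cases "b \<le> a")
  case True
  then have "a + L - b = (a - b) + L" by simp
  then have "(a + L - b) mod L = (a - b) mod L" by simp
  then show ?thesis using True assms by simp
qed (use assms in simp)

lemma dset_triple:
  "dset L {x, y, z} = {(x + L - x) mod L, (x + L - y) mod L, (x + L - z) mod L,
     (y + L - x) mod L, (y + L - y) mod L, (y + L - z) mod L,
     (z + L - x) mod L, (z + L - y) mod L, (z + L - z) mod L}"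
  unfolding dset_def by blast

(* A weight-3 codeword {x < y < z} cuts the cycle Z_L into three gaps p, q, r with
   p + q + r = L; its nonzero differences are the gaps and the sums of two gaps. *)
definition gap_differences :: "nat \<Rightarrow> nat \<Rightarrow> nat \<Rightarrow> nat set" where
  "gap_differences p q r = {p, q, r, q + r, p + r, p + q}"

lemma dstar_triple:
  fixes x y z L :: nat
  assumes "x < y" "y < z" "z < L"
  shows "dstar L {x, y, z} = gap_differences (y - x) (z - y) (x + L - z)"
proof -
  have sums: "z - y + (x + L - z) = x + L - y" "y - x + (x + L - z) = y + L - z"
    "y - x + (z - y) = z - x" using assms by auto
  have "dset L {x, y, z} = {0, x + L - y, x + L - z, y - x, y + L - z, z - x, z - y}"
    using assms by (simp add: dset_triple diff_mod_eq insert_commute)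
  moreover have "x + L - y \<noteq> 0" "x + L - z \<noteq> 0" "y - x \<noteq> 0" "y + L - z \<noteq> 0" "z - x \<noteq> 0"
    "z - y \<noteq> 0" using assms by auto
  ultimately show ?thesis
    unfolding dstar_def gap_differences_def sums by auto
qed

lemma symmetric_wlog_sorted:
  fixes P :: "nat \<Rightarrow> nat \<Rightarrow> nat \<Rightarrow> bool"
  assumes "\<And>p q r. P p q r \<Longrightarrow> P q p r" "\<And>p q r. P p q r \<Longrightarrow> P p r q"
    and "\<And>p q r. p \<le> q \<Longrightarrow> q \<le> r \<Longrightarrow> P p q r"
  shows "P p q r"
  by (metis assms nat_le_linear)

lemma gap_differences_swap:
  "gap_differences q p r = gap_differences p q r"
  "gap_differences p r q = gap_differences p q r"
  unfolding gap_differences_def by (auto simp: add.commute)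

lemma three_element_sorted:
  fixes I :: "nat set"
  assumes "card I = 3"
  obtains x y z where "x < y" "y < z" "I = {x, y, z}"
proof -
  obtain x y z where xyz: "x \<noteq> y" "x \<noteq> z" "y \<noteq> z" "I = {x, y, z}"
    using card_3_iff[THEN iffD1, OF assms] by blast
  have "x \<noteq> y \<longrightarrow> x \<noteq> z \<longrightarrow> y \<noteq> z \<longrightarrow> I = {x, y, z} \<longrightarrow>
      (\<exists>a b c. a < b \<and> b < c \<and> I = {a, b, c})"
  proof (induction x y z rule: symmetric_wlog_sorted)
    case (3 x y z)
    then show ?case by (metis le_neq_implies_less)
  qed (auto simp: insert_commute)
  with xyz that show ?thesis by blast
qed

lemma codeword_gaps:
  assumes "I \<in> P_set L 3" "1 \<notin> dstar L I"
  obtains p q r where "2 \<le> p" "2 \<le> q" "2 \<le> r" "p + q + r = L"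
    "dstar L I = gap_differences p q r"
proof -
  obtain x y z where xyz: "x < y" "y < z" "I = {x, y, z}"
    using three_element_sorted assms(1) unfolding P_set_def by blast
  have "z < L" using assms(1) xyz(3) unfolding P_set_def by auto
  define p q r where "p = y - x" and "q = z - y" and "r = x + L - z"
  have D: "dstar L I = gap_differences p q r"
    unfolding xyz(3) p_def q_def r_def using dstar_triple[OF xyz(1,2) \<open>z < L\<close>] .
  have "p \<noteq> 1" "q \<noteq> 1" "r \<noteq> 1"
    using assms(2) unfolding D gap_differences_def by auto
  moreover have "1 \<le> p" "1 \<le> q" "1 \<le> r" "p + q + r = L"
    using xyz \<open>z < L\<close> unfolding p_def q_def r_def by auto
  ultimately have "2 \<le> p" "2 \<le> q" "2 \<le> r" by simp_all
  with that D \<open>p + q + r = L\<close> show ?thesis by blast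
qed

lemma gap_differences_range:
  assumes "2 \<le> p" "2 \<le> q" "2 \<le> r" "p + q + r = L"
  shows "gap_differences p q r \<subseteq> {2..L - 2}"
  using assms unfolding gap_differences_def by auto

(* The footprint of a difference set D is D together with its successors D + 1.  For
   distinct codewords of an SCAC the footprints are disjoint, so they pack into [2, L - 1]. *)
definition footprint :: "nat set \<Rightarrow> nat set" where
  "footprint D = D \<union> Suc ` D"

(* The footprint of a codeword covers at least 8 points, unless the codeword is (nearly)
   an equilateral triangle, when it contains L div 3, or has gaps L/4, L/4, L/2, when it
   contains L div 4; in those cases we still have a weaker lower bound. *)
definition footprint_large :: "nat \<Rightarrow> nat set \<Rightarrow> bool" where
  "footprint_large L X \<longleftrightarrow> 8 \<le> card X
     \<or> (L div 3 \<in> X \<and> (if 3 dvd L then 4 else 6) \<le> card X)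
     \<or> (4 dvd L \<and> L div 4 \<in> X \<and> 6 \<le> card X)"

lemma card_ge_if_subset: "finite X \<Longrightarrow> Y \<subseteq> X \<Longrightarrow> n \<le> card Y \<Longrightarrow> n \<le> card X"
  using card_mono le_trans by blast

(* Footprint size for gaps a, a, b.  The exceptional triangles all have two equal gaps:
   b = a (equilateral), b = 2a (gaps L/4, L/4, L/2) and b = a + 1 or b = a - 1 (nearly equilateral). *)
lemma footprint_two_equal_gaps:
  assumes "2 \<le> a" "2 \<le> b" "even b"
  shows "footprint_large (2 * a + b) (footprint (gap_differences a a b))"
proof -
  define X where "X = footprint (gap_differences a a b)"
  have X: "X = {a, a+1, b, b+1, 2*a, 2*a+1, a+b, a+b+1}"
    unfolding X_def footprint_def gap_differences_def by auto
  have fin: "finite X" unfolding X by simp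
  consider "b = a" | "b = 2*a" | "b = a+1" | "b + 1 = a" | "b \<notin> {a, 2*a, a+1, a-1}"
    by force
  then have "footprint_large (2 * a + b) X"
  proof cases
    case 1
    have "4 \<le> card X"
      by (rule card_ge_if_subset[OF fin, of "{a, a+1, 2*a, 2*a+1}"]) (use assms 1 in \<open>auto simp: X\<close>)
    then show ?thesis using 1 unfolding footprint_large_def X by auto
  next
    case 2
    have "6 \<le> card X"
      by (rule card_ge_if_subset[OF fin, of "{a, a+1, 2*a, 2*a+1, 3*a, 3*a+1}"])
        (use assms 2 in \<open>auto simp: X\<close>)
    moreover have "(2 * a + b) div 4 = a" "4 dvd (2 * a + b)" using 2 by simp_all
    ultimately show ?thesis using 2 unfolding footprint_large_def X by auto
  next
    case 3
    have "a \<noteq> 2" using assms(3) 3 by auto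
    have "6 \<le> card X"
      by (rule card_ge_if_subset[OF fin, of "{a, a+1, a+2, 2*a, 2*a+1, 2*a+2}"])
        (use assms 3 \<open>a \<noteq> 2\<close> in \<open>auto simp: X\<close>)
    moreover have "(2 * a + b) div 3 = a" "\<not> 3 dvd (2 * a + b)" using 3 by presburger+
    ultimately show ?thesis using 3 unfolding footprint_large_def X by auto
  next
    case 4
    have "6 \<le> card X"
      by (rule card_ge_if_subset[OF fin, of "{b, b+1, b+2, 2*b+1, 2*b+2, 2*b+3}"])
        (use assms 4 in \<open>auto simp: X\<close>)
    moreover have "(2 * a + b) div 3 = b" "\<not> 3 dvd (2 * a + b)" using 4 by presburger+
    ultimately show ?thesis using 4 unfolding footprint_large_def X by auto
  next
    case 5
    have "8 \<le> card X" unfolding X using assms 5 by (auto simp: card_insert_if)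
    then show ?thesis unfolding footprint_large_def by simp
  qed
  then show ?thesis unfolding X_def .
qed

lemma footprint_distinct_gaps:
  assumes "2 \<le> p" "p < q" "q < r" "even (p + q + r)"
  shows "8 \<le> card (footprint (gap_differences p q r))"
proof -
  define X where "X = footprint (gap_differences p q r)"
  have X: "X = {p, q, r, q+r, p+r, p+q, p+1, q+1, r+1, q+r+1, p+r+1, p+q+1}"
    unfolding X_def footprint_def gap_differences_def by auto
  have fin: "finite X" unfolding X by simp
  consider "r = p + q" "q = p + 1" | "r = p + q" "q \<noteq> p + 1" | "r \<noteq> p + q" "q \<noteq> p + 1"
    | "r \<noteq> p + q" "q = p + 1" "r \<noteq> p + 2" | "q = p + 1" "r = p + 2"
    by force
  then have "8 \<le> card X"
  proof cases
    case 1
    then show ?thesis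
      by (intro card_ge_if_subset[OF fin, of "{p, p+1, p+2, 2*p+1, 2*p+2, 3*p+1, 3*p+2, 3*p+3}"])
        (use assms in \<open>auto simp: X\<close>)
  next
    case 2
    then show ?thesis
      by (intro card_ge_if_subset[OF fin, of "{p, p+1, q, q+1, p+q, p+q+1, 2*p+q, p+2*q}"])
        (use assms in \<open>auto simp: X\<close>)
  next
    case 3
    then show ?thesis
      by (intro card_ge_if_subset[OF fin, of "{p, q, r, q+r, p+r, p+q, p+1, q+r+1}"])
        (use assms in \<open>auto simp: X\<close>)
  next
    case 4
    then show ?thesis
      by (intro card_ge_if_subset[OF fin, of "{p, q, r, q+r, p+r, p+q, q+1, q+r+1}"])
        (use assms in \<open>auto simp: X\<close>)
  next
    case 5
    then have "p \<noteq> 2" using assms(4) by auto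
    with 5 show ?thesis
      by (intro card_ge_if_subset[OF fin, of "{p, q, r, q+r, p+r, p+q, r+1, q+r+1}"])
        (use assms in \<open>auto simp: X\<close>)
  qed
  then show ?thesis unfolding X_def .
qed

lemma footprint_large_gaps:
  assumes "2 \<le> p" "2 \<le> q" "2 \<le> r" "even (p + q + r)"
  shows "footprint_large (p + q + r) (footprint (gap_differences p q r))"
proof -
  have "2 \<le> p \<longrightarrow> 2 \<le> q \<longrightarrow> 2 \<le> r \<longrightarrow> even (p + q + r) \<longrightarrow>
      footprint_large (p + q + r) (footprint (gap_differences p q r))"
  proof (induction p q r rule: symmetric_wlog_sorted)
    case (1 p q r)
    then show ?case by (simp add: gap_differences_swap add_ac)
  next
    case (2 p q r)
    then show ?case by (simp add: gap_differences_swap add_ac)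
  next
    case (3 p q r)
    show ?case
    proof (intro impI)
      assume gaps: "2 \<le> p" "2 \<le> q" "2 \<le> r" "even (p + q + r)"
      consider "p = q" | "q = r" | "p < q" "q < r" using 3 by linarith
      then show "footprint_large (p + q + r) (footprint (gap_differences p q r))"
      proof cases
        case 1
        then show ?thesis using footprint_two_equal_gaps[of p r] gaps by (simp add: mult_2)
      next
        case 2
        then show ?thesis using footprint_two_equal_gaps[of q p] gaps
          by (simp add: gap_differences_swap mult_2 add_ac)
      next
        case 3
        then show ?thesis using footprint_distinct_gaps[of p q r] gaps
          unfolding footprint_large_def by simp
      qed
    qed
  qed
  with assms show ?thesis by blast
qed

(* In an SCAC with at least two codewords no codeword has the difference 1: the shift
   of 1 is 0, which lies in every difference set. *)
lemma SCAC_no_unit_difference: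
  assumes "is_SCAC L w C" "0 < w" "I \<in> C" "J \<in> C" "I \<noteq> J"
  shows "1 \<notin> dstar L I"
proof
  assume one: "1 \<in> dstar L I"
  have "J \<in> P_set L w" using assms(1,4) unfolding is_SCAC_def by blast
  then obtain j where "j \<in> J" using assms(2) unfolding P_set_def by fastforce
  then have "(j + L - j) mod L \<in> dset L J" unfolding dset_def by blast
  moreover have "(1 + L - 1) mod L \<in> shift_closure L (dstar L I)"
    using one unfolding shift_closure_def by blast
  ultimately have "0 \<in> shift_closure L (dstar L I) \<inter> dset L J" by simp
  then show False using assms(1,3-5) unfolding is_SCAC_def by blast
qed

(* Footprints of distinct codewords are disjoint: a common point would force two
   differences of distinct codewords to be equal or adjacent, which the SCAC condition forbids. *)
lemma SCAC_footprints_disjoint: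
  assumes "is_SCAC L w C" "I \<in> C" "J \<in> C" "I \<noteq> J"
    and range: "\<And>u. u \<in> dstar L I \<Longrightarrow> u + 1 < L"
  shows "footprint (dstar L I) \<inter> footprint (dstar L J) = {}"
proof -
  have close: "v \<noteq> u \<and> v \<noteq> u + 1 \<and> v + 1 \<noteq> u"
    if u: "u \<in> dstar L I" and v: "v \<in> dstar L J" for u v
  proof -
    have "0 < u" "u + 1 < L" using u range unfolding dstar_def by auto
    then have "(u + 1) mod L = u + 1" "(u + L - 1) mod L = u - 1"
      using diff_mod_eq[of u L 1] by simp_all
    then have "{u, u + 1, u - 1} \<subseteq> shift_closure L (dstar L I)"
      using u unfolding shift_closure_def by force
    moreover have "v \<in> dset L J" using v unfolding dstar_def by blast
    ultimately show ?thesis using assms(1-4) \<open>0 < u\<close> unfolding is_SCAC_def by force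
  qed
  show ?thesis unfolding footprint_def using close by fastforce
qed

lemma disjoint_family_card_sum:
  fixes T :: "'a \<Rightarrow> nat set"
  assumes "finite C" "\<And>I. I \<in> C \<Longrightarrow> T I \<subseteq> S" "finite S"
    and "\<And>I J. I \<in> C \<Longrightarrow> J \<in> C \<Longrightarrow> I \<noteq> J \<Longrightarrow> T I \<inter> T J = {}"
  shows "(\<Sum>I\<in>C. card (T I)) \<le> card S"
proof -
  have "(\<Sum>I\<in>C. card (T I)) = card (\<Union>I\<in>C. T I)"
    using assms by (intro card_UN_disjoint[symmetric]) (auto intro: finite_subset)
  also have "\<dots> \<le> card S" using assms by (intro card_mono) auto
  finally show ?thesis .
qed

lemma disjoint_family_unique_member:
  assumes "finite C" "\<And>I J. I \<in> C \<Longrightarrow> J \<in> C \<Longrightarrow> I \<noteq> J \<Longrightarrow> T I \<inter> T J = {}"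
  shows "card {I \<in> C. x \<in> T I} \<le> 1"
  using assms by (auto simp: card_le_Suc0_iff_eq)

lemma sum_indicator_const:
  assumes "finite C"
  shows "(\<Sum>I\<in>C. if P I then k else 0) = k * card {I \<in> C. P I}"
  using sum.inter_filter[OF assms, of "\<lambda>_. k" P] by (simp add: mult.commute)

(* Each member needs 8
   points, except that the unique member containing L div 3 may miss up to 4 (or 2) points and
   the unique member containing L div 4 may miss 2. *)
lemma footprint_packing:
  fixes T :: "'a \<Rightarrow> nat set"
  assumes fin: "finite C" and range: "\<And>I. I \<in> C \<Longrightarrow> T I \<subseteq> {2..<L}"
    and disj: "\<And>I J. I \<in> C \<Longrightarrow> J \<in> C \<Longrightarrow> I \<noteq> J \<Longrightarrow> T I \<inter> T J = {}"
    and large: "\<And>I. I \<in> C \<Longrightarrow> footprint_large L (T I)"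
  shows "8 * card C \<le> (L - 2) + (if 3 dvd L then 4 else 2) + (if 4 dvd L then 2 else 0)"
proof -
  define d3 :: nat where "d3 = (if 3 dvd L then 4 else 2)"
  define C3 where "C3 = {I \<in> C. L div 3 \<in> T I}"
  define C4 where "C4 = {I \<in> C. 4 dvd L \<and> L div 4 \<in> T I}"
  define bonus where "bonus I = (if I \<in> C3 then d3 else 0) + (if I \<in> C4 then 2 else 0)" for I
  have "card C3 \<le> 1" unfolding C3_def using disjoint_family_unique_member[OF fin disj] .
  then have "d3 * card C3 \<le> d3" using mult_le_mono2[of "card C3" 1 d3] by simp
  moreover have "2 * card C4 \<le> (if 4 dvd L then 2 else 0)"
    using disjoint_family_unique_member[OF fin disj, where x = "L div 4"] unfolding C4_def by auto
  ultimately have bonus_total: "d3 * card C3 + 2 * card C4 \<le> d3 + (if 4 dvd L then 2 else 0)"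
    by linarith
  have each: "8 \<le> card (T I) + bonus I" if "I \<in> C" for I
    using large[OF that] that unfolding footprint_large_def bonus_def C3_def C4_def d3_def
    by (auto split: if_splits)
  have "8 * card C = (\<Sum>I\<in>C. 8)" by simp
  also have "\<dots> \<le> (\<Sum>I\<in>C. card (T I) + bonus I)" by (intro sum_mono each)
  also have "\<dots> = (\<Sum>I\<in>C. card (T I)) + d3 * card C3 + 2 * card C4"
    unfolding bonus_def sum.distrib sum_indicator_const[OF fin] C3_def C4_def
    by (simp add: Collect_conj_eq Int_absorb1)
  also have "(\<Sum>I\<in>C. card (T I)) \<le> L - 2"
    using disjoint_family_card_sum[OF fin range _ disj] by simp
  finally show ?thesis using bonus_total unfolding d3_def by linarith
qed

lemma SCAC_weight_3_packing:
  assumes scac: "is_SCAC L 3 C" and "even L" and "2 \<le> card C"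
  shows "8 * card C \<le> (L - 2) + (if 3 dvd L then 4 else 2) + (if 4 dvd L then 2 else 0)"
proof -
  have "C \<subseteq> Pow {0..<L}" using scac unfolding is_SCAC_def P_set_def by auto
  then have fin: "finite C" by (rule finite_subset) simp
  have codeword: "dstar L I \<subseteq> {2..L - 2} \<and> footprint_large L (footprint (dstar L I))"
    if I: "I \<in> C" for I
  proof -
    have "\<not> C \<subseteq> {I}" using \<open>2 \<le> card C\<close> card_mono[of "{I}" C] by auto
    then obtain J where "J \<in> C" "J \<noteq> I" by blast
    have "I \<in> P_set L 3" using scac I unfolding is_SCAC_def by blast
    moreover have "1 \<notin> dstar L I"
      using SCAC_no_unit_difference[OF scac _ I \<open>J \<in> C\<close>] \<open>J \<noteq> I\<close> by simp
    ultimately obtain p q r where pqr: "2 \<le> p" "2 \<le> q" "2 \<le> r" "p + q + r = L"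
      and D: "dstar L I = gap_differences p q r" by (rule codeword_gaps)
    show ?thesis
      unfolding D using gap_differences_range[OF pqr] footprint_large_gaps[OF pqr(1-3)]
        pqr(4) \<open>even L\<close> by simp
  qed
  show ?thesis
  proof (rule footprint_packing[OF fin, where T = "\<lambda>I. footprint (dstar L I)"])
    show "footprint (dstar L I) \<subseteq> {2..<L}" if "I \<in> C" for I
      using codeword[OF that] unfolding footprint_def by (auto simp: subset_iff)
    show "footprint_large L (footprint (dstar L I))" if "I \<in> C" for I
      using codeword[OF that] by blast
    show "footprint (dstar L I) \<inter> footprint (dstar L J) = {}"
      if "I \<in> C" "J \<in> C" "I \<noteq> J" for I J
      using codeword[OF that(1)]
      by (intro SCAC_footprints_disjoint[OF scac that]) (auto simp: subset_iff)
  qed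
qed

lemma packing_count_bound:
  fixes L c :: nat
  assumes "even L" "18 \<le> L"
    and "8 * c \<le> (L - 2) + (if 3 dvd L then 4 else 2) + (if 4 dvd L then 2 else 0)"
  shows "c \<le> (if L mod 12 = 0 then (L + 4) div 8
              else if L mod 12 \<in> {4, 6, 8} then (L + 2) div 8
              else L div 8)"
proof -
  have div8: "\<And>n. 8 * c \<le> n \<Longrightarrow> c \<le> n div 8" by linarith
  have "L mod 12 = 0 \<or> L mod 12 = 2 \<or> L mod 12 = 4 \<or> L mod 12 = 6 \<or> L mod 12 = 8
      \<or> L mod 12 = 10" using \<open>even L\<close> by presburger
  then consider "L mod 12 = 0" | "L mod 12 = 2" | "L mod 12 = 4" | "L mod 12 = 6"
    | "L mod 12 = 8" | "L mod 12 = 10" by metis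
  then show ?thesis
  proof cases
    case 1
    then have "3 dvd L" "4 dvd L" by presburger+
    then show ?thesis using 1 assms(2,3) div8 by simp
  next
    case 2
    then have "\<not> 3 dvd L" "\<not> 4 dvd L" by presburger+
    then show ?thesis using 2 assms(2,3) div8 by simp
  next
    case 3
    then have "\<not> 3 dvd L" "4 dvd L" by presburger+
    then show ?thesis using 3 assms(2,3) div8 by simp
  next
    case 4
    then have "3 dvd L" "\<not> 4 dvd L" by presburger+
    then show ?thesis using 4 assms(2,3) div8 by simp
  next
    case 5
    then have "\<not> 3 dvd L" "4 dvd L" by presburger+
    then show ?thesis using 5 assms(2,3) div8 by simp
  next
    case 6
    then have "\<not> 3 dvd L" "\<not> 4 dvd L" by presburger+
    then show ?thesis using 6 assms(2,3) div8 by simp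
  qed
qed

lemma M_S_le:
  assumes "\<And>C. is_SCAC L w C \<Longrightarrow> card C \<le> b"
  shows "M_S L w \<le> b"
proof -
  define S where "S = {card C | C. is_SCAC L w C}"
  have "S \<subseteq> {..b}" using assms unfolding S_def by auto
  then have "finite S" by (rule finite_subset) simp
  moreover have "is_SCAC L w {}" unfolding is_SCAC_def by simp
  then have "S \<noteq> {}" unfolding S_def by blast
  ultimately show ?thesis
    using \<open>S \<subseteq> {..b}\<close> unfolding M_S_def S_def[symmetric] by (simp add: subset_iff)
qed

theorem mainTheorem6:
  fixes L :: nat
  assumes "L \<ge> 18" and "even L"
  shows "M_S L 3 \<le> (if L mod 12 = 0 then (L + 4) div 8
                      else if L mod 12 \<in> {4, 6, 8} then (L + 2) div 8
                      else L div 8)"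
proof (rule M_S_le)
  fix C assume scac: "is_SCAC L 3 C"
  show "card C \<le> (if L mod 12 = 0 then (L + 4) div 8
                      else if L mod 12 \<in> {4, 6, 8} then (L + 2) div 8
                      else L div 8)" (is "_ \<le> ?bound")
  proof (cases "2 \<le> card C")
    case True
    then show ?thesis
      using packing_count_bound[OF assms(2,1) SCAC_weight_3_packing[OF scac assms(2)]] by blast
  next
    case False
    moreover have "2 \<le> ?bound" using assms(1) by auto
    ultimately show ?thesis by linarith
  qed
qed

end
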